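(* Let $\phi$ be a Möbius transformation of $\overline{\mathbb{R}}^n$ with $b:=\phi^{-1}(\infty)\in\mathbb{R}^n\setminus\{0\}$, let $S^{n-1}(b,R)$ be its isometric sphere, $\sigma$ the reflection in it, and $a=\sigma(0)$. Let $\Sigma_0$ be a $k$-dimensional affine plane containing $\phi(0)$ and orthogonal to $\phi(\infty)-\phi(a)$. Then for every $0<r<|b|$, $\Sigma_0\cap\phi(B^n_r)$ is a flat $k$-disk of radius $\dfrac{R^2r}{|b|\sqrt{|b|^2-r^2}}$.
   Context: $B^n_r$ is the open ball of radius $r$ centered at $0$. The reflection in $S^{n-1}(b,R)$ is $\sigma(x)=b+\frac{R^2}{|x-b|^2}(x-b)$ for $x\ne b$, $\sigma(b)=\infty$, $\sigma(\infty)=b$. A Möbius transformation is a finite composition of reflections in spheres or hyperplanes; if $\phi(\infty)\ne\infty$ then $\phi=\psi\circ\sigma$ for a unique reflection $\sigma$ in a sphere centered at $\phi^{-1}(\infty)$ (the isometric sphere) and a unique Euclidean isometry $\psi$. *)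

theory Defs
  imports "HOL-Analysis.Analysis"
begin

text \<open>The one-point compactification of R^n is modelled as 'a option, where None is the
point at infinity and Some x is the finite point x.\<close>

definition sphere_reflection :: "'a::euclidean_space \<Rightarrow> real \<Rightarrow> 'a option \<Rightarrow> 'a option" where
  "sphere_reflection b R p =
     (case p of None \<Rightarrow> Some b
      | Some x \<Rightarrow> (if x = b then None
                   else Some (b + (R\<^sup>2 / (norm (x - b))\<^sup>2) *\<^sub>R (x - b))))"

definition hyperplane_reflection :: "'a::euclidean_space \<Rightarrow> real \<Rightarrow> 'a option \<Rightarrow> 'a option" where
  "hyperplane_reflection u c p =
     map_option (\<lambda>x. x - ((2 * (x \<bullet> u - c)) / (u \<bullet> u)) *\<^sub>R u) p"

inductive moebius :: "('a::euclidean_space option \<Rightarrow> 'a option) \<Rightarrow> bool" where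
  refl_sphere: "R > 0 \<Longrightarrow> moebius (sphere_reflection b R)"
| refl_hyperplane: "u \<noteq> 0 \<Longrightarrow> moebius (hyperplane_reflection u c)"
| comp: "moebius f \<Longrightarrow> moebius g \<Longrightarrow> moebius (f \<circ> g)"

definition euclidean_isometry :: "('a::euclidean_space \<Rightarrow> 'a) \<Rightarrow> bool" where
  "euclidean_isometry \<psi> \<longleftrightarrow> (\<forall>x y. dist (\<psi> x) (\<psi> y) = dist x y)"

end

theory Submission
  imports Defs
begin

text \<open>
  Write \<open>\<phi> = \<psi> \<circ> \<sigma>\<close> and \<open>a = \<sigma>(0)\<close>. Then \<open>\<phi>(\<infinity>) - \<phi>(a) = \<psi>(b) - \<psi>(0)\<close>, so the isometry \<open>\<psi>\<close>
  pulls \<open>\<Sigma>\<^sub>0\<close> back into the hyperplane \<open>H\<close> through \<open>a\<close> orthogonal to \<open>b\<close>. For \<open>z \<in> H\<close> one has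
  \<open>(z - b) \<bullet> b = -R\<^sup>2\<close>, so with \<open>d = |z - b|\<^sup>2\<close> both \<open>|\<sigma>(z)|\<^sup>2 = |b|\<^sup>2 - R\<^sup>4/d\<close> and
  \<open>|z - a|\<^sup>2 = d - R\<^sup>4/|b|\<^sup>2\<close>. Hence \<open>|\<sigma>(z)| < r\<close> is a condition on \<open>|z - a|\<close> alone: \<open>H \<inter> \<sigma>(B\<^sub>r)\<close>
  is the disk in \<open>H\<close> about \<open>a\<close>, and \<open>\<psi>\<close> moves it to a disk about \<open>\<phi>(0)\<close>.
\<close>

definition inversion :: "'a::real_inner \<Rightarrow> real \<Rightarrow> 'a \<Rightarrow> 'a" where
  "inversion b R x = b + (R\<^sup>2 / (norm (x - b))\<^sup>2) *\<^sub>R (x - b)"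

lemma sphere_reflection_Some:
  "x \<noteq> b \<Longrightarrow> sphere_reflection b R (Some x) = Some (inversion b R x)"
  by (simp add: sphere_reflection_def inversion_def)

lemma sphere_reflection_None: "sphere_reflection b R None = Some b"
  by (simp add: sphere_reflection_def)

lemma sphere_reflection_image_Some:
  assumes "b \<notin> S"
  shows "sphere_reflection b R ` Some ` S = Some ` inversion b R ` S"
proof -
  have "sphere_reflection b R (Some x) = Some (inversion b R x)" if "x \<in> S" for x
    using that assms sphere_reflection_Some by metis
  then show ?thesis
    by (simp add: image_image)
qed

lemma inversion_zero: "inversion b R 0 = (1 - R\<^sup>2 / (norm b)\<^sup>2) *\<^sub>R b"
  by (simp add: inversion_def algebra_simps)

lemma inversion_ne_center:
  "x \<noteq> b \<Longrightarrow> R \<noteq> 0 \<Longrightarrow> inversion b R x \<noteq> b"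
  by (simp add: inversion_def)

lemma inversion_inversion:
  assumes "x \<noteq> b" "R \<noteq> 0"
  shows "inversion b R (inversion b R x) = x"
proof -
  define t where "t = R\<^sup>2 / (norm (x - b))\<^sup>2"
  have "t > 0" using assms by (simp add: t_def)
  have "(norm (t *\<^sub>R (x - b)))\<^sup>2 = R\<^sup>2 * t"
    using assms by (simp add: t_def power_mult_distrib power2_eq_square)
  then have "(R\<^sup>2 / (norm (t *\<^sub>R (x - b)))\<^sup>2) * t = 1"
    using assms \<open>t > 0\<close> by simp
  then have "b + (R\<^sup>2 / (norm (t *\<^sub>R (x - b)))\<^sup>2) *\<^sub>R (t *\<^sub>R (x - b)) = x"
    by (metis add.commute diff_add_cancel scaleR_one scaleR_scaleR)
  then show ?thesis
    unfolding inversion_def t_def[symmetric] by simp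
qed

lemma inversion_image_iff:
  assumes "b \<notin> S" "R \<noteq> 0"
  shows "z \<in> inversion b R ` S \<longleftrightarrow> z \<noteq> b \<and> inversion b R z \<in> S"
proof
  assume "z \<in> inversion b R ` S"
  then obtain x where "x \<in> S" "z = inversion b R x" by blast
  moreover have "x \<noteq> b" using \<open>x \<in> S\<close> assms(1) by blast
  ultimately show "z \<noteq> b \<and> inversion b R z \<in> S"
    using assms(2) by (simp add: inversion_ne_center inversion_inversion)
next
  assume "z \<noteq> b \<and> inversion b R z \<in> S"
  then show "z \<in> inversion b R ` S"
    using assms(2) by (metis image_eqI inversion_inversion)
qed

lemma inner_on_reflection_plane:
  assumes "(z - inversion b R 0) \<bullet> b = 0" "b \<noteq> 0"
  shows "(z - b) \<bullet> b = - R\<^sup>2"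
proof -
  have "z - b = (z - inversion b R 0) - (R\<^sup>2 / (norm b)\<^sup>2) *\<^sub>R b"
    by (simp add: inversion_zero algebra_simps)
  then have "(z - b) \<bullet> b = (z - inversion b R 0) \<bullet> b - (R\<^sup>2 / (norm b)\<^sup>2) * (b \<bullet> b)"
    by (simp only: inner_diff_left inner_scaleR_left)
  then show ?thesis
    using assms by (simp add: dot_square_norm)
qed

lemma norm_inversion_on_reflection_plane:
  assumes "(z - b) \<bullet> b = - R\<^sup>2"
  shows "(norm (inversion b R z))\<^sup>2 = (norm b)\<^sup>2 - R ^ 4 / (norm (z - b))\<^sup>2"
proof -
  define w where "w = z - b"
  define t where "t = R\<^sup>2 / (norm w)\<^sup>2"
  have "(norm (inversion b R z))\<^sup>2 = (b + t *\<^sub>R w) \<bullet> (b + t *\<^sub>R w)"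
    by (simp add: inversion_def t_def w_def power2_norm_eq_inner)
  also have "\<dots> = b \<bullet> b + 2 * t * (w \<bullet> b) + t\<^sup>2 * (w \<bullet> w)"
    by (simp add: inner_add_left inner_add_right inner_commute power2_eq_square algebra_simps)
  also have "\<dots> = (norm b)\<^sup>2 - R ^ 4 / (norm w)\<^sup>2"
    using assms
    by (cases "w = 0")
      (simp_all add: w_def t_def dot_square_norm field_simps power2_eq_square eval_nat_numeral)
  finally show ?thesis by (simp add: w_def)
qed

lemma dist_on_reflection_plane:
  assumes "(z - b) \<bullet> b = - R\<^sup>2" "b \<noteq> 0"
  shows "(norm (z - inversion b R 0))\<^sup>2 = (norm (z - b))\<^sup>2 - R ^ 4 / (norm b)\<^sup>2"
proof -
  define w where "w = z - b"
  define c where "c = R\<^sup>2 / (norm b)\<^sup>2"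
  have "(norm (z - inversion b R 0))\<^sup>2 = (w + c *\<^sub>R b) \<bullet> (w + c *\<^sub>R b)"
    by (simp add: inversion_zero w_def c_def algebra_simps power2_norm_eq_inner)
  also have "\<dots> = w \<bullet> w + 2 * c * (w \<bullet> b) + c\<^sup>2 * (b \<bullet> b)"
    by (simp add: inner_add_left inner_add_right inner_commute power2_eq_square algebra_simps)
  also have "\<dots> = (norm w)\<^sup>2 - R ^ 4 / (norm b)\<^sup>2"
    using assms by (simp add: w_def c_def dot_square_norm field_simps power2_eq_square eval_nat_numeral)
  finally show ?thesis by (simp add: w_def)
qed

lemma power2_less_iff_less:
  fixes x y :: "'a::linordered_semidom"
  shows "0 \<le> x \<Longrightarrow> 0 \<le> y \<Longrightarrow> x\<^sup>2 < y\<^sup>2 \<longleftrightarrow> x < y"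
  by (simp add: power_mono_iff flip: not_le)

lemma reflection_plane_inter_inversion_ball:
  fixes b :: "'a::real_inner"
  assumes "b \<noteq> 0" "R \<noteq> 0" "0 < r" "r < norm b"
  defines "a \<equiv> inversion b R 0"
  shows "{z. (z - a) \<bullet> b = 0} \<inter> inversion b R ` ball 0 r
       = {z. (z - a) \<bullet> b = 0} \<inter> ball a (R\<^sup>2 * r / (norm b * sqrt ((norm b)\<^sup>2 - r\<^sup>2)))"
    (is "?H \<inter> _ = ?H \<inter> ball a ?\<rho>")
proof -
  have rb: "r\<^sup>2 < (norm b)\<^sup>2"
    using assms(3,4) by (simp add: power_strict_mono)
  have \<rho>_pos: "?\<rho> > 0"
    using assms rb by simp
  have \<rho>2: "?\<rho>\<^sup>2 = R ^ 4 * r\<^sup>2 / ((norm b)\<^sup>2 * ((norm b)\<^sup>2 - r\<^sup>2))"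
    using rb by (simp add: power_divide power_mult_distrib flip: power_mult)
  have "z \<in> inversion b R ` ball 0 r \<longleftrightarrow> z \<in> ball a ?\<rho>" if "z \<in> ?H" for z
  proof -
    have zb: "(z - b) \<bullet> b = - R\<^sup>2"
      using that assms(1) inner_on_reflection_plane unfolding a_def by blast
    define d where "d = (norm (z - b))\<^sup>2"
    have "d > 0"
      using zb assms(2) by (auto simp: d_def)
    have "z \<noteq> b" "b \<notin> ball 0 r"
      using zb assms(2,4) by auto
    then have "z \<in> inversion b R ` ball 0 r \<longleftrightarrow> (norm (inversion b R z))\<^sup>2 < r\<^sup>2"
      using assms(2,3) by (simp add: inversion_image_iff power2_less_iff_less)
    also have "\<dots> \<longleftrightarrow> d < R ^ 4 / ((norm b)\<^sup>2 - r\<^sup>2)"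
      unfolding norm_inversion_on_reflection_plane[OF zb] d_def[symmetric]
      using \<open>d > 0\<close> rb by (simp add: field_simps)
    also have "\<dots> \<longleftrightarrow> d - R ^ 4 / (norm b)\<^sup>2 < ?\<rho>\<^sup>2"
    proof -
      have "R ^ 4 / ((norm b)\<^sup>2 - r\<^sup>2) - R ^ 4 / (norm b)\<^sup>2 = ?\<rho>\<^sup>2"
        using assms(1) rb unfolding \<rho>2 by (simp add: field_simps)
      then show ?thesis by linarith
    qed
    also have "\<dots> \<longleftrightarrow> (dist a z)\<^sup>2 < ?\<rho>\<^sup>2"
      using dist_on_reflection_plane[OF zb assms(1)]
      by (simp add: d_def a_def dist_norm norm_minus_commute)
    also have "\<dots> \<longleftrightarrow> z \<in> ball a ?\<rho>"
      using \<rho>_pos by (simp add: power2_less_iff_less)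
    finally show ?thesis .
  qed
  then show ?thesis by blast
qed

lemma euclidean_isometry_orthogonal_transformation:
  "euclidean_isometry \<psi> \<Longrightarrow> orthogonal_transformation (\<lambda>x. \<psi> x - \<psi> 0)"
  by (simp add: euclidean_isometry_def orthogonal_transformation_isometry dist_norm)

lemma euclidean_isometry_inj: "euclidean_isometry \<psi> \<Longrightarrow> inj \<psi>"
  unfolding euclidean_isometry_def by (metis dist_eq_0_iff injI)

lemma euclidean_isometry_surj:
  fixes \<psi> :: "'a::euclidean_space \<Rightarrow> 'a"
  assumes "euclidean_isometry \<psi>"
  shows "surj \<psi>"
proof -
  have "\<psi> = (+) (\<psi> 0) \<circ> (\<lambda>x. \<psi> x - \<psi> 0)"
    by auto
  then show ?thesis
    using orthogonal_transformation_surj[OF euclidean_isometry_orthogonal_transformation[OF assms]]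
    by (metis comp_surj surj_plus)
qed

lemma euclidean_isometry_inner_diff:
  assumes "euclidean_isometry \<psi>"
  shows "(\<psi> x - \<psi> y) \<bullet> (\<psi> u - \<psi> v) = (x - y) \<bullet> (u - v)"
proof -
  let ?L = "\<lambda>x. \<psi> x - \<psi> 0"
  have L: "orthogonal_transformation ?L"
    using assms by (rule euclidean_isometry_orthogonal_transformation)
  have "\<psi> x - \<psi> y = ?L (x - y)" for x y
    using linear_diff[OF orthogonal_transformation_linear[OF L]] by simp
  then have "(\<psi> x - \<psi> y) \<bullet> (\<psi> u - \<psi> v) = ?L (x - y) \<bullet> ?L (u - v)"
    by presburger
  also have "\<dots> = (x - y) \<bullet> (u - v)"
    using L by (simp add: orthogonal_transformation_def)
  finally show ?thesis .
qed

lemma euclidean_isometry_image_ball: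
  fixes \<psi> :: "'a::euclidean_space \<Rightarrow> 'a"
  assumes "euclidean_isometry \<psi>"
  shows "\<psi> ` ball x e = ball (\<psi> x) e"
proof -
  let ?L = "\<lambda>x. \<psi> x - \<psi> 0"
  have "\<psi> ` ball x e = (+) (\<psi> 0) ` ?L ` ball x e"
    by (simp add: image_image)
  also have "\<dots> = ball (\<psi> x) e"
    unfolding image_orthogonal_transformation_ball[OF euclidean_isometry_orthogonal_transformation[OF assms]]
      image_add_ball by simp
  finally show ?thesis .
qed

lemma euclidean_isometry_pullback_orthogonal_plane:
  fixes \<psi> :: "'a::euclidean_space \<Rightarrow> 'a"
  assumes "euclidean_isometry \<psi>" "\<psi> a \<in> \<Sigma>"
    and "\<forall>x\<in>\<Sigma>. \<forall>y\<in>\<Sigma>. (x - y) \<bullet> (\<psi> u - \<psi> v) = 0"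
  shows "\<Sigma> \<subseteq> \<psi> ` {z. (z - a) \<bullet> (u - v) = 0}"
proof
  fix y assume "y \<in> \<Sigma>"
  obtain z where y: "y = \<psi> z"
    using euclidean_isometry_surj[OF assms(1)] by (metis surjD)
  have "(\<psi> z - \<psi> a) \<bullet> (\<psi> u - \<psi> v) = 0"
    using assms(2,3) \<open>y \<in> \<Sigma>\<close> by (simp add: y)
  then show "y \<in> \<psi> ` {z. (z - a) \<bullet> (u - v) = 0}"
    by (simp add: y euclidean_isometry_inner_diff[OF assms(1)])
qed

theorem mainTheorem7:
  fixes \<phi> :: "'a::euclidean_space option \<Rightarrow> 'a option"
    and \<psi> :: "'a \<Rightarrow> 'a"
    and b a p q q' :: 'a and R r :: real and k :: nat and \<Sigma> :: "'a set"
  assumes "moebius \<phi>"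
    and "\<phi> (Some b) = None" and "b \<noteq> 0"
    and "R > 0" and "euclidean_isometry \<psi>"
    and "\<phi> = map_option \<psi> \<circ> sphere_reflection b R"
    and "sphere_reflection b R (Some 0) = Some a"
    and "\<phi> (Some 0) = Some p" and "\<phi> None = Some q" and "\<phi> (Some a) = Some q'"
    and "affine \<Sigma>" and "aff_dim \<Sigma> = int k" and "p \<in> \<Sigma>"
    and "\<forall>x\<in>\<Sigma>. \<forall>y\<in>\<Sigma>. (x - y) \<bullet> (q - q') = 0"
    and "0 < r" and "r < norm b"
  shows "\<exists>c\<in>\<Sigma>. Some ` \<Sigma> \<inter> \<phi> ` (Some ` ball 0 r)
           = Some ` (\<Sigma> \<inter> ball c (R\<^sup>2 * r / (norm b * sqrt ((norm b)\<^sup>2 - r\<^sup>2))))"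
proof -
  let ?\<sigma> = "inversion b R"
  let ?\<rho> = "R\<^sup>2 * r / (norm b * sqrt ((norm b)\<^sup>2 - r\<^sup>2))"
  define H where "H = {z. (z - a) \<bullet> b = 0}"
  have a: "a = ?\<sigma> 0"
    using assms(3,7) by (simp add: sphere_reflection_Some)
  have \<phi>_Some: "\<phi> (Some x) = Some (\<psi> (?\<sigma> x))" if "x \<noteq> b" for x
    using that assms(6) by (simp add: sphere_reflection_Some)
  have pqq': "p = \<psi> a" "q = \<psi> b" "q' = \<psi> 0"
    using assms(3,4,6,8-10) \<phi>_Some[of 0] \<phi>_Some[of a] inversion_ne_center[of 0 b R]
      inversion_inversion[of 0 b R]
    by (auto simp: a sphere_reflection_None)
  have "b \<notin> ball 0 r"
    using assms(16) by simp
  have "\<phi> ` Some ` ball 0 r = map_option \<psi> ` sphere_reflection b R ` Some ` ball 0 r"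
    by (simp add: assms(6) image_comp)
  also have "\<dots> = Some ` \<psi> ` ?\<sigma> ` ball 0 r"
    unfolding sphere_reflection_image_Some[OF \<open>b \<notin> ball 0 r\<close>] by (simp add: image_image)
  finally have \<phi>_image: "\<phi> ` Some ` ball 0 r = Some ` \<psi> ` ?\<sigma> ` ball 0 r" .
  have "\<Sigma> \<subseteq> \<psi> ` H"
    using euclidean_isometry_pullback_orthogonal_plane[OF assms(5), of a \<Sigma> b 0] assms(13,14)
    by (simp add: H_def pqq')
  then have "\<Sigma> \<inter> \<psi> ` ?\<sigma> ` ball 0 r = \<Sigma> \<inter> \<psi> ` (H \<inter> ?\<sigma> ` ball 0 r)"
    using euclidean_isometry_inj[OF assms(5)] by (auto simp: image_Int)
  also have "\<dots> = \<Sigma> \<inter> \<psi> ` (H \<inter> ball a ?\<rho>)"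
    using reflection_plane_inter_inversion_ball[of b R r] assms(3,4,15,16) by (simp add: H_def a)
  also have "\<dots> = \<Sigma> \<inter> ball p ?\<rho>"
    using \<open>\<Sigma> \<subseteq> \<psi> ` H\<close> euclidean_isometry_inj[OF assms(5)]
      euclidean_isometry_image_ball[OF assms(5)] by (auto simp: image_Int pqq')
  finally show ?thesis
    using assms(13) by (metis \<phi>_image image_Int inj_Some)
qed

end
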